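(* In the general model, put $\theta=\lambda^{-1}$. For every integer $s\ge1$ and every $t\in[\theta^{s-1},\theta^{s}]$, $$\mathbb{E}\,|\widehat{\mu}(t)|^2\le \ell^{-s}+(\ell-1)\sum_{k=0}^{s-1}\ell^{-k-1}\,|\widehat{\nu}(t\lambda^k)|^2 .$$
   Context: General model. Let $\ell\ge 2$ and let $T=\{1,\dots,\ell\}^*$ be the set of finite words over $\{1,\dots,\ell\}$ (the rooted $\ell$-regular tree; the root is the empty word, $|v|$ is the length of $v$, and $v|j$ is the prefix of $v$ of length $j$). Let $D\subset\mathbb{R}$ be a finite set and $\eta=\sum_{d\in D}p_d\delta_d$ a probability measure on $D$. Let $\{a_v\}_{v\in T,\,|v|\ge 1}$ be i.i.d. random variables with law $\eta$. Fix $\lambda\in(0,1)$. For $v\in T$ with $|v|=n$ put $f(v)=\sum_{j=1}^n a_{v|j}\lambda^j$, and for an infinite word $\omega\in\{1,\dots,\ell\}^{\mathbb{N}}$ put $f(\omega)=\sum_{j\ge1}a_{\omega|j}\lambda^j$. The random probability measure $\mu$ is the image under $f$ of the uniform product measure on $\{1,\dots,\ell\}^{\mathbb{N}}$ (equivalently the a.s. weak limit of $\mu_n=\ell^{-n}\sum_{|v|=n}\delta_{f(v)}$). Let $\nu$ be the deterministic law of $\sum_{n\ge1}b_n\lambda^n$, where $b_n$ are i.i.d. with law $\eta$. Fourier transforms are $\widehat{\rho}(t)=\int e^{itx}\,d\rho(x)$; thus $\widehat{\nu}(t)=\prod_{n\ge1}\widehat{\eta}(t\lambda^n)$. $\mathbb{E}$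 denotes expectation over the random labels. *)

theory Defs
  imports "HOL-Probability.Probability"
begin

definition wordM :: "nat \<Rightarrow> (nat \<Rightarrow> nat) measure" where
  "wordM l = PiM UNIV (\<lambda>_::nat. measure_pmf (pmf_of_set {1..l}))"

text \<open>Prefix of length j of an infinite word, as a finite word (vertex of the tree).\<close>
definition pref :: "(nat \<Rightarrow> nat) \<Rightarrow> nat \<Rightarrow> nat list" where
  "pref \<omega> j = map \<omega> [0..<j]"

definition fval :: "real \<Rightarrow> (nat list \<Rightarrow> real) \<Rightarrow> (nat \<Rightarrow> nat) \<Rightarrow> real" where
  "fval lam a \<omega> = (\<Sum>j. a (pref \<omega> (Suc j)) * lam ^ Suc j)"

definition rmu :: "nat \<Rightarrow> real \<Rightarrow> (nat list \<Rightarrow> real) \<Rightarrow> real measure" where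
  "rmu l lam a = distr (wordM l) borel (fval lam a)"

text \<open>Law of the i.i.d. labels (eta-distributed) indexed by the vertices of the tree.
  (The label at the root is never used.)\<close>
definition labelM :: "real pmf \<Rightarrow> (nat list \<Rightarrow> real) measure" where
  "labelM \<eta> = PiM UNIV (\<lambda>_::nat list. measure_pmf \<eta>)"

text \<open>nu = law of sum_{n>=1} b_n lambda^n with b_n i.i.d. eta (here b is indexed from 0).\<close>
definition nu :: "real pmf \<Rightarrow> real \<Rightarrow> real measure" where
  "nu \<eta> lam = distr (PiM UNIV (\<lambda>_::nat. measure_pmf \<eta>)) borel
                 (\<lambda>b. \<Sum>n. b n * lam ^ Suc n)"

end

theory Submission
  imports Defs
begin

(*
  Write |mu^(t)|^2 as the integral of cos (t (f omega - f omega')) over pairs of words and take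
  the expectation over the labels first.  If omega and omega' first differ in letter k
  (letters are indexed from 0), the two sums share their first k terms, so
  f omega - f omega' = lambda^k (X - Y), where X and Y are the label series along the two
  branches below the split vertex.  The branches are disjoint, hence X and Y are independent
  with law nu, and the pair contributes exactly |nu^(t lambda^k)|^2.  Such pairs have
  probability l^-k - l^-(k+1); the pairs agreeing in their first s letters have probability
  l^-s and contribute at most 1.
*)

section \<open>Characteristic functions\<close>

lemma Re_iexp: "Re (iexp x) = cos x"
  by (simp add: cis_conv_exp[symmetric])

lemma (in prob_space) integrable_iexp_real:
  assumes "f \<in> borel_measurable M"
  shows "integrable M (\<lambda>x. iexp (f x))"
  using assms by (intro integrable_iexp) auto

lemma char_distr_uminus:
  assumes [measurable]: "X \<in> borel_measurable M"
  shows "char (distr M borel (\<lambda>x. - X x)) s = cnj (char (distr M borel X) s)"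
proof -
  have "char (distr M borel (\<lambda>x. - X x)) s = (\<integral>x. iexp (s * - X x) \<partial>M)"
    by (simp add: char_def integral_distr)
  also have "\<dots> = (\<integral>x. cnj (iexp (s * X x)) \<partial>M)"
    by (simp add: exp_cnj)
  also have "\<dots> = cnj (char (distr M borel X) s)"
    by (simp add: char_def integral_distr)
  finally show ?thesis .
qed

lemma (in prob_space) integral_cos_diff_indep:
  assumes indep: "indep_var borel X borel Y"
    and X: "distr M borel X = N" and Y: "distr M borel Y = N"
  shows "(\<integral>x. cos (s * (X x - Y x)) \<partial>M) = (cmod (char N s))\<^sup>2"
proof -
  have [measurable]: "X \<in> borel_measurable M" and Y_meas [measurable]: "Y \<in> borel_measurable M"
    using indep_var_rv1[OF indep] indep_var_rv2[OF indep] by simp_all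
  have "indep_var borel X borel (\<lambda>x. - Y x)"
    using indep_var_compose[OF indep, of "\<lambda>x. x" borel uminus borel]
    by (simp add: comp_def)
  then have "char (distr M borel (\<lambda>x. X x + - Y x)) s
      = char (distr M borel X) s * char (distr M borel (\<lambda>x. - Y x)) s"
    by (rule char_distr_add)
  also have "\<dots> = char N s * cnj (char N s)"
    by (simp add: char_distr_uminus[OF Y_meas] X Y)
  also have "\<dots> = complex_of_real ((cmod (char N s))\<^sup>2)"
    by (rule complex_norm_square[symmetric])
  finally have *: "char (distr M borel (\<lambda>x. X x - Y x)) s = complex_of_real ((cmod (char N s))\<^sup>2)"
    by simp
  have "(\<integral>x. cos (s * (X x - Y x)) \<partial>M) = (\<integral>x. Re (iexp (s * (X x - Y x))) \<partial>M)"
    by (simp only: Re_iexp)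
  also have "\<dots> = Re (\<integral>x. iexp (s * (X x - Y x)) \<partial>M)"
    by (rule integral_Re) (rule integrable_iexp_real, measurable)
  also have "\<dots> = (cmod (char N s))\<^sup>2"
    using * by (simp add: char_def integral_distr)
  finally show ?thesis .
qed

lemma (in prob_space)
  shows indep_var_fst_snd: "prob_space.indep_var (M \<Otimes>\<^sub>M M) M fst M snd"
    and distr_pair_snd: "distr (M \<Otimes>\<^sub>M M) M snd = M"
proof -
  have fst: "distr (M \<Otimes>\<^sub>M M) M fst = M"
    by (rule distr_pair_fst)
  interpret pair_prob_space M M ..
  have "distr (M \<Otimes>\<^sub>M M) M snd = distr (M \<Otimes>\<^sub>M M) M (snd \<circ> (\<lambda>(x, y). (y, x)))"
    by (subst (1) distr_pair_swap) (simp add: distr_distr)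
  also have "\<dots> = M"
    using fst by (simp add: comp_def case_prod_beta)
  finally show snd: "distr (M \<Otimes>\<^sub>M M) M snd = M" .
  show "P.indep_var M fst M snd"
    using fst snd by (simp add: P.indep_var_distribution_eq)
qed

lemma (in prob_space) cmod_char_distr_sq:
  assumes [measurable]: "f \<in> borel_measurable M"
  shows "(cmod (char (distr M borel f) t))\<^sup>2 = (\<integral>z. cos (t * (f (fst z) - f (snd z))) \<partial>(M \<Otimes>\<^sub>M M))"
proof -
  \<comment> \<open>Fixed before the interpretation, which rebinds these names to the product space.\<close>
  note indep = indep_var_fst_snd and fst = distr_pair_fst[of M] and snd = distr_pair_snd
  interpret pair_prob_space M M ..
  have "P.indep_var borel (f \<circ> fst) borel (f \<circ> snd)"
    by (rule P.indep_var_compose[OF indep]) measurable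
  moreover have "distr (M \<Otimes>\<^sub>M M) borel (f \<circ> fst) = distr M borel f"
    by (subst fst[symmetric]) (simp add: distr_distr)
  moreover have "distr (M \<Otimes>\<^sub>M M) borel (f \<circ> snd) = distr M borel f"
    by (subst snd[symmetric]) (simp add: distr_distr)
  ultimately show ?thesis
    by (simp add: P.integral_cos_diff_indep comp_def)
qed

section \<open>Series of labels along a ray\<close>

definition series_along :: "real \<Rightarrow> ('v \<Rightarrow> real) \<Rightarrow> (nat \<Rightarrow> 'v) \<Rightarrow> real" where
  "series_along lam a p = (\<Sum>n. a (p n) * lam ^ Suc n)"

lemma summable_series_along:
  fixes a :: "'v \<Rightarrow> real"
  assumes "bounded (range a)" "\<bar>lam\<bar> < 1"
  shows "summable (\<lambda>n. a (p n) * lam ^ Suc n)"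
proof -
  have "\<exists>B. \<forall>v. \<bar>a v\<bar> \<le> B"
    using assms(1) by (simp add: bounded_real)
  then obtain B where B: "\<And>v. \<bar>a v\<bar> \<le> B" by blast
  have "summable (\<lambda>n. B * (\<bar>lam\<bar> * \<bar>lam\<bar> ^ n))"
    using assms(2) by (intro summable_mult summable_geometric) simp
  then show ?thesis
    by (rule summable_comparison_test'[where N=0]) (simp add: abs_mult power_abs mult_right_mono B)
qed

lemma borel_measurable_PiM_pmf_component:
  "i \<in> I \<Longrightarrow> (\<lambda>b. b i :: real) \<in> borel_measurable (PiM I (\<lambda>_. measure_pmf q))"
  by (rule measurable_compose[OF measurable_component_singleton]) (simp_all add: measurable_count_space_eq1)

lemma borel_measurable_series_along:
  assumes "\<And>n. p n \<in> I"
  shows "(\<lambda>a. series_along lam a p) \<in> borel_measurable (PiM I (\<lambda>_. measure_pmf \<eta>))"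
  unfolding series_along_def
  by (intro borel_measurable_suminf borel_measurable_times borel_measurable_const
      borel_measurable_PiM_pmf_component assms)

section \<open>The random labels and the random measure\<close>

lemma sets_wordM [measurable_cong]:
  "sets (wordM l) = sets (PiM UNIV (\<lambda>_::nat. count_space (UNIV::nat set)))"
  unfolding wordM_def by (intro sets_PiM_cong) auto

lemma space_wordM [simp]: "space (wordM l) = UNIV"
  by (simp add: wordM_def space_PiM)

lemma space_labelM [simp]: "space (labelM \<eta>) = UNIV"
  by (simp add: labelM_def space_PiM)

lemma prob_space_wordM: "prob_space (wordM l)"
  unfolding wordM_def by (intro prob_space_PiM prob_space_measure_pmf)

lemma prob_space_labelM: "prob_space (labelM \<eta>)"
  unfolding labelM_def by (intro prob_space_PiM prob_space_measure_pmf)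

lemma borel_measurable_labelM_component [measurable]:
  "(\<lambda>a. a v) \<in> borel_measurable (labelM \<eta>)"
  unfolding labelM_def by (rule borel_measurable_PiM_pmf_component) simp

lemma borel_measurable_labelM_series_along [measurable]:
  "(\<lambda>a. series_along lam a p) \<in> borel_measurable (labelM \<eta>)"
  unfolding labelM_def by (rule borel_measurable_series_along) simp

lemma measurable_pref [measurable]:
  "(\<lambda>\<omega>. pref \<omega> n) \<in> measurable (wordM l) (count_space UNIV)"
proof (induction n)
  case 0
  then show ?case by (simp add: pref_def)
next
  case (Suc n)
  have "(\<lambda>\<omega>. pref \<omega> (Suc n)) = (\<lambda>\<omega>. (\<lambda>(xs, x). xs @ [x]) (pref \<omega> n, \<omega> n))"
    by (simp add: pref_def)
  also have "\<dots> \<in> measurable (wordM l) (count_space UNIV)"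
    by (rule measurable_compose[OF measurable_Pair[OF Suc]]) measurable
  finally show ?case .
qed

lemma measurable_fval [measurable (raw)]:
  assumes f: "f \<in> measurable N (labelM \<eta>)" and g: "g \<in> measurable N (wordM l)"
  shows "(\<lambda>x. fval lam (f x) (g x)) \<in> borel_measurable N"
proof -
  have "(\<lambda>x. (\<lambda>v x. f x v * lam ^ Suc j) (pref (g x) (Suc j)) x) \<in> borel_measurable N" for j
    by (rule measurable_compose_countable[OF _ measurable_compose[OF g measurable_pref]])
      (intro borel_measurable_times borel_measurable_const
        measurable_compose[OF f borel_measurable_labelM_component])
  then show ?thesis
    unfolding fval_def by (intro borel_measurable_suminf) (simp only:)
qed

lemma AE_labelM_in_set_pmf: "AE a in labelM \<eta>. \<forall>v. a v \<in> set_pmf \<eta>"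
  unfolding AE_all_countable labelM_def
  by (intro allI AE_PiM_component) (auto simp: AE_measure_pmf prob_space_measure_pmf)

lemma AE_labelM_bounded:
  assumes "finite (set_pmf \<eta>)"
  shows "AE a in labelM \<eta>. bounded (range a)"
  using AE_labelM_in_set_pmf
  by eventually_elim (use assms in \<open>auto intro: bounded_subset[OF finite_imp_bounded]\<close>)

lemma fval_split:
  assumes "bounded (range a)" "\<bar>lam\<bar> < 1"
  shows "fval lam a \<omega> = (\<Sum>i<k. a (pref \<omega> (Suc i)) * lam ^ Suc i)
    + lam ^ k * series_along lam a (\<lambda>n. pref \<omega> (n + k + 1))"
proof -
  have "fval lam a \<omega> = (\<Sum>n. a (pref \<omega> (Suc (n + k))) * lam ^ Suc (n + k))
      + (\<Sum>i<k. a (pref \<omega> (Suc i)) * lam ^ Suc i)"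
    unfolding fval_def by (rule suminf_split_initial_segment[OF summable_series_along[OF assms]])
  also have "(\<Sum>n. a (pref \<omega> (Suc (n + k))) * lam ^ Suc (n + k))
      = (\<Sum>n. lam ^ k * (a (pref \<omega> (n + k + 1)) * lam ^ Suc n))"
    by (simp add: power_add mult_ac)
  also have "\<dots> = lam ^ k * series_along lam a (\<lambda>n. pref \<omega> (n + k + 1))"
    unfolding series_along_def by (rule suminf_mult[OF summable_series_along[OF assms]])
  finally show ?thesis by simp
qed

lemma fval_diff_eq_tails:
  assumes "bounded (range a)" "\<bar>lam\<bar> < 1" and agree: "\<forall>i<k. \<omega> i = \<omega>' i"
  shows "fval lam a \<omega> - fval lam a \<omega>' = lam ^ k *
    (series_along lam a (\<lambda>n. pref \<omega> (n + k + 1)) - series_along lam a (\<lambda>n. pref \<omega>' (n + k + 1)))"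
proof -
  have "pref \<omega> (Suc i) = pref \<omega>' (Suc i)" if "i < k" for i
    using agree that by (simp add: pref_def)
  then have "(\<Sum>i<k. a (pref \<omega> (Suc i)) * lam ^ Suc i) = (\<Sum>i<k. a (pref \<omega>' (Suc i)) * lam ^ Suc i)"
    by (intro sum.cong) auto
  then show ?thesis
    using fval_split[OF assms(1,2), of \<omega> k] fval_split[OF assms(1,2), of \<omega>' k]
    by (simp add: right_diff_distrib)
qed

lemma distr_labelM_series_along:
  assumes "inj p"
  shows "distr (labelM \<eta>) borel (\<lambda>a. series_along lam a p) = nu \<eta> lam"
proof -
  let ?B = "PiM UNIV (\<lambda>_::nat. measure_pmf \<eta>)"
  have reindex: "distr (labelM \<eta>) ?B (\<lambda>a. \<lambda>n\<in>UNIV. a (p n)) = ?B"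
    using distr_PiM_reindex[of UNIV "\<lambda>_. measure_pmf \<eta>" p UNIV] assms
    unfolding labelM_def by (simp add: prob_space_measure_pmf)
  have "nu \<eta> lam = distr (distr (labelM \<eta>) ?B (\<lambda>a. \<lambda>n\<in>UNIV. a (p n))) borel (\<lambda>b. series_along lam b id)"
    by (simp add: nu_def reindex series_along_def)
  also have "\<dots> = distr (labelM \<eta>) borel ((\<lambda>b. series_along lam b id) \<circ> (\<lambda>a. \<lambda>n\<in>UNIV. a (p n)))"
  proof (rule distr_distr)
    show "(\<lambda>b. series_along lam b id) \<in> borel_measurable ?B"
      by (rule borel_measurable_series_along) simp
    show "(\<lambda>a. \<lambda>n\<in>UNIV. a (p n)) \<in> measurable (labelM \<eta>) ?B"
      unfolding labelM_def by (intro measurable_restrict measurable_component_singleton) auto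
  qed
  finally show ?thesis
    by (simp add: comp_def series_along_def)
qed

lemma indep_vars_labelM_components:
  "prob_space.indep_vars (labelM \<eta>) (\<lambda>_. measure_pmf \<eta>) (\<lambda>v a. a v) UNIV"
proof -
  interpret prob_space "labelM \<eta>" by (rule prob_space_labelM)
  have rv: "(\<lambda>a. a v) \<in> measurable (labelM \<eta>) (measure_pmf \<eta>)" for v
    unfolding labelM_def by (rule measurable_component_singleton) simp
  have "distr (labelM \<eta>) (PiM UNIV (\<lambda>_. measure_pmf \<eta>)) (\<lambda>a. \<lambda>v\<in>UNIV. a v)
      = PiM UNIV (\<lambda>v. distr (labelM \<eta>) (measure_pmf \<eta>) (\<lambda>a. a v))"
    unfolding labelM_def restrict_UNIV
    by (subst distr_PiM_component) (simp_all add: prob_space_measure_pmf)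
  then show ?thesis
    by (rule indep_vars_iff_distr_eq_PiM[OF UNIV_not_empty rv, THEN iffD2])
qed

lemma indep_var_series_along:
  assumes "range p \<inter> range q = {}"
  shows "prob_space.indep_var (labelM \<eta>)
    borel (\<lambda>a. series_along lam a p) borel (\<lambda>a. series_along lam a q)"
proof -
  interpret prob_space "labelM \<eta>" by (rule prob_space_labelM)
  have restricted_series:
    "(\<lambda>r. series_along lam r p) \<in> borel_measurable (PiM (range p) (\<lambda>_. measure_pmf \<eta>))"
    for p :: "nat \<Rightarrow> nat list"
    by (rule borel_measurable_series_along) simp
  have "indep_var borel ((\<lambda>r. series_along lam r p) \<circ> (\<lambda>a. restrict a (range p)))
      borel ((\<lambda>r. series_along lam r q) \<circ> (\<lambda>a. restrict a (range q)))"
    by (rule indep_var_compose[OF indep_var_restrict[OF indep_vars_labelM_components assms]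
          restricted_series restricted_series]) simp_all
  moreover have "(\<lambda>r. series_along lam r p) \<circ> (\<lambda>a. restrict a (range p)) = (\<lambda>a. series_along lam a p)"
    for p :: "nat \<Rightarrow> nat list"
    by (simp add: fun_eq_iff series_along_def)
  ultimately show ?thesis by simp
qed

lemma integral_cos_fval_diff_first_difference:
  assumes "finite (set_pmf \<eta>)" "\<bar>lam\<bar> < 1"
    and agree: "\<forall>i<k. \<omega> i = \<omega>' i" and split: "\<omega> k \<noteq> \<omega>' k"
  shows "(\<integral>a. cos (t * (fval lam a \<omega> - fval lam a \<omega>')) \<partial>labelM \<eta>)
    = (cmod (char (nu \<eta> lam) (t * lam ^ k)))\<^sup>2"
proof -
  interpret prob_space "labelM \<eta>" by (rule prob_space_labelM)
  define p where "p n = pref \<omega> (n + k + 1)" for n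
  define q where "q n = pref \<omega>' (n + k + 1)" for n
  have length: "length (p n) = n + k + 1" "length (q n) = n + k + 1" for n
    by (simp_all add: p_def q_def pref_def)
  have "inj p" "inj q"
    by (metis injI length add_right_cancel)+
  have "p n ! k = \<omega> k" "q n ! k = \<omega>' k" for n
    by (simp_all add: p_def q_def pref_def del: upt_Suc)
  then have disjoint: "range p \<inter> range q = {}"
    using split by (metis disjoint_iff rangeE)
  have "(\<integral>a. cos (t * (fval lam a \<omega> - fval lam a \<omega>')) \<partial>labelM \<eta>)
      = (\<integral>a. cos (t * lam ^ k * (series_along lam a p - series_along lam a q)) \<partial>labelM \<eta>)"
  proof (rule integral_cong_AE)
    show "AE a in labelM \<eta>. cos (t * (fval lam a \<omega> - fval lam a \<omega>'))
        = cos (t * lam ^ k * (series_along lam a p - series_along lam a q))"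
      using AE_labelM_bounded[OF assms(1)]
      by eventually_elim
        (simp add: fval_diff_eq_tails[OF _ assms(2) agree] p_def[abs_def] q_def[abs_def] mult.assoc)
  qed measurable
  also have "\<dots> = (cmod (char (nu \<eta> lam) (t * lam ^ k)))\<^sup>2"
    by (rule integral_cos_diff_indep[OF indep_var_series_along[OF disjoint]
          distr_labelM_series_along[OF \<open>inj p\<close>] distr_labelM_series_along[OF \<open>inj q\<close>]])
  finally show ?thesis .
qed

section \<open>Pairs of words\<close>

definition agree_upto :: "nat \<Rightarrow> ((nat \<Rightarrow> 'a) \<times> (nat \<Rightarrow> 'a)) set" where
  "agree_upto k = {(\<omega>, \<omega>'). \<forall>i<k. \<omega> i = \<omega>' i}"

lemma agree_upto_sets [measurable]: "agree_upto k \<in> sets (wordM l \<Otimes>\<^sub>M wordM l)"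
proof -
  \<comment> \<open>Equality of letters, phrased via a countable witness so that measurable can handle it.\<close>
  have "agree_upto k = {z \<in> space (wordM l \<Otimes>\<^sub>M wordM l). \<forall>i<k. \<exists>c. fst z i = c \<and> snd z i = c}"
    by (auto simp: agree_upto_def space_pair_measure)
  also have "\<dots> \<in> sets (wordM l \<Otimes>\<^sub>M wordM l)"
    by measurable
  finally show ?thesis .
qed

lemma AE_wordM_letters:
  assumes "l \<ge> 1"
  shows "AE \<omega> in wordM l. \<forall>i. \<omega> i \<in> {1..l}"
  unfolding AE_all_countable wordM_def
  using assms by (intro allI AE_PiM_component) (auto simp: AE_measure_pmf_iff prob_space_measure_pmf)

lemma emeasure_wordM_prefix:
  assumes "\<forall>i<k. \<omega> i \<in> {1..l}"
  shows "emeasure (wordM l) {\<omega>'. \<forall>i<k. \<omega>' i = \<omega> i} = ennreal ((1 / real l) ^ k)"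
proof -
  have "{\<omega>'. \<forall>i<k. \<omega>' i = \<omega> i}
      = prod_emb UNIV (\<lambda>_. measure_pmf (pmf_of_set {1..l})) {..<k} (PiE {..<k} (\<lambda>i. {\<omega> i}))"
    by (auto simp: prod_emb_iff PiE_iff)
  then have "emeasure (wordM l) {\<omega>'. \<forall>i<k. \<omega>' i = \<omega> i}
      = (\<Prod>i<k. emeasure (measure_pmf (pmf_of_set {1..l})) {\<omega> i})"
    unfolding wordM_def by (simp add: emeasure_PiM_emb prob_space_measure_pmf)
  also have "\<dots> = (\<Prod>i<k. ennreal (1 / real l))"
    using assms by (intro prod.cong) (auto simp: emeasure_pmf_single)
  also have "\<dots> = ennreal ((1 / real l) ^ k)"
    by (simp add: prod_ennreal ennreal_power)
  finally show ?thesis .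
qed

lemma measure_agree_upto:
  assumes "l \<ge> 1"
  shows "measure (wordM l \<Otimes>\<^sub>M wordM l) (agree_upto k) = (1 / real l) ^ k"
proof -
  interpret prob_space "wordM l" by (rule prob_space_wordM)
  have "emeasure (wordM l \<Otimes>\<^sub>M wordM l) (agree_upto k)
      = (\<integral>\<^sup>+\<omega>. emeasure (wordM l) (Pair \<omega> -` agree_upto k) \<partial>wordM l)"
    by (rule emeasure_pair_measure_alt) measurable
  also have "\<dots> = (\<integral>\<^sup>+\<omega>. ennreal ((1 / real l) ^ k) \<partial>wordM l)"
  proof (rule nn_integral_cong_AE)
    show "AE \<omega> in wordM l. emeasure (wordM l) (Pair \<omega> -` agree_upto k) = ennreal ((1 / real l) ^ k)"
      using AE_wordM_letters[OF assms]
    proof eventually_elim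
      case (elim \<omega>)
      have "Pair \<omega> -` agree_upto k = {\<omega>'. \<forall>i<k. \<omega>' i = \<omega> i}"
        by (auto simp: agree_upto_def)
      then show ?case
        using elim by (simp add: emeasure_wordM_prefix)
    qed
  qed
  also have "\<dots> = ennreal ((1 / real l) ^ k)"
    using emeasure_space_1 by simp
  finally show ?thesis
    by (simp add: measure_def)
qed

lemma measure_agree_upto_diff_Suc:
  assumes "l \<ge> 1"
  shows "measure (wordM l \<Otimes>\<^sub>M wordM l) (agree_upto k - agree_upto (Suc k))
    = (1 / real l) ^ k - (1 / real l) ^ Suc k"
proof -
  interpret W: prob_space "wordM l" by (rule prob_space_wordM)
  interpret pair_prob_space "wordM l" "wordM l" ..
  have "prob (agree_upto k - agree_upto (Suc k)) = prob (agree_upto k) - prob (agree_upto (Suc k))"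
    by (rule P.finite_measure_Diff[OF agree_upto_sets agree_upto_sets]) (auto simp: agree_upto_def)
  then show ?thesis
    by (simp only: measure_agree_upto[OF assms])
qed

definition split_weight :: "(nat \<Rightarrow> real) \<Rightarrow> nat \<Rightarrow> (nat \<Rightarrow> 'a) \<times> (nat \<Rightarrow> 'a) \<Rightarrow> real" where
  "split_weight c s z = indicator (agree_upto s) z
    + (\<Sum>k<s. c k * indicator (agree_upto k - agree_upto (Suc k)) z)"

lemma split_weight_agree_upto:
  assumes "z \<in> agree_upto s"
  shows "split_weight c s z = 1"
proof -
  have "z \<in> agree_upto (Suc k)" if "k < s" for k
    using assms that by (auto simp: agree_upto_def)
  then show ?thesis
    using assms by (simp add: split_weight_def)
qed

lemma split_weight_first_difference:
  assumes agree: "\<forall>i<k. fst z i = snd z i" and split: "fst z k \<noteq> snd z k" and "k < s"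
  shows "split_weight c s z = c k"
proof -
  have agree_iff: "z \<in> agree_upto j \<longleftrightarrow> j \<le> k" for j
    using agree split by (cases z) (auto simp: agree_upto_def not_le[symmetric])
  have "c j * indicator (agree_upto j - agree_upto (Suc j)) z = (if j = k then c k else 0)" for j
    by (simp add: indicator_def agree_iff)
  then show ?thesis
    using \<open>k < s\<close> by (simp add: split_weight_def agree_iff)
qed

lemma
  assumes "l \<ge> 1"
  shows integrable_split_weight: "integrable (wordM l \<Otimes>\<^sub>M wordM l) (split_weight c s)"
    and integral_split_weight: "(\<integral>z. split_weight c s z \<partial>(wordM l \<Otimes>\<^sub>M wordM l))
      = (1 / real l) ^ s + (\<Sum>k<s. c k * ((1 / real l) ^ k - (1 / real l) ^ Suc k))"
proof -
  interpret W: prob_space "wordM l" by (rule prob_space_wordM)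
  interpret pair_prob_space "wordM l" "wordM l" ..
  have integrable_indicator: "integrable (wordM l \<Otimes>\<^sub>M wordM l) (indicator A :: _ \<Rightarrow> real)"
    if "A \<in> sets (wordM l \<Otimes>\<^sub>M wordM l)" for A
    using that by (simp add: less_top[symmetric] P.emeasure_finite)
  have integrable_step: "integrable (wordM l \<Otimes>\<^sub>M wordM l)
      (\<lambda>z. c k * indicator (agree_upto k - agree_upto (Suc k)) z)" for k
    by (intro Bochner_Integration.integrable_mult_right integrable_indicator sets.Diff agree_upto_sets)
  show "integrable (wordM l \<Otimes>\<^sub>M wordM l) (split_weight c s)"
    unfolding split_weight_def[abs_def]
    by (intro Bochner_Integration.integrable_add Bochner_Integration.integrable_sum
        integrable_indicator agree_upto_sets integrable_step)
  have "(\<integral>z. split_weight c s z \<partial>(wordM l \<Otimes>\<^sub>M wordM l))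
      = prob (agree_upto s) + (\<Sum>k<s. c k * prob (agree_upto k - agree_upto (Suc k)))"
    unfolding split_weight_def
    by (simp only: Bochner_Integration.integral_add Bochner_Integration.integral_sum
        integrable_indicator agree_upto_sets integrable_step Bochner_Integration.integrable_sum
        integral_mult_right_zero Bochner_Integration.integral_indicator space_pair_measure space_wordM
        UNIV_Times_UNIV Int_UNIV_right)
  then show "(\<integral>z. split_weight c s z \<partial>(wordM l \<Otimes>\<^sub>M wordM l))
      = (1 / real l) ^ s + (\<Sum>k<s. c k * ((1 / real l) ^ k - (1 / real l) ^ Suc k))"
    by (simp only: measure_agree_upto[OF assms] measure_agree_upto_diff_Suc[OF assms])
qed

definition pair_corr :: "real pmf \<Rightarrow> real \<Rightarrow> real \<Rightarrow> (nat \<Rightarrow> nat) \<times> (nat \<Rightarrow> nat) \<Rightarrow> real" where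
  "pair_corr \<eta> lam t z = (\<integral>a. cos (t * (fval lam a (fst z) - fval lam a (snd z))) \<partial>labelM \<eta>)"

lemma
  shows integrable_pair_corr: "integrable (wordM l \<Otimes>\<^sub>M wordM l) (pair_corr \<eta> lam t)"
    and integral_cmod_char_rmu_sq: "(\<integral>a. (cmod (char (rmu l lam a) t))\<^sup>2 \<partial>labelM \<eta>)
      = (\<integral>z. pair_corr \<eta> lam t z \<partial>(wordM l \<Otimes>\<^sub>M wordM l))"
proof -
  interpret W: prob_space "wordM l" by (rule prob_space_wordM)
  interpret WW: pair_prob_space "wordM l" "wordM l" ..
  interpret L: prob_space "labelM \<eta>" by (rule prob_space_labelM)
  interpret pair_prob_space "labelM \<eta>" "wordM l \<Otimes>\<^sub>M wordM l" ..
  define G where "G a z = cos (t * (fval lam a (fst z) - fval lam a (snd z)))" for a z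
  have "case_prod G \<in> borel_measurable (labelM \<eta> \<Otimes>\<^sub>M (wordM l \<Otimes>\<^sub>M wordM l))"
    unfolding G_def case_prod_beta by measurable
  then have integrable: "integrable (labelM \<eta> \<Otimes>\<^sub>M (wordM l \<Otimes>\<^sub>M wordM l)) (case_prod G)"
    by (intro P.integrable_const_bound[where B=1]) (auto simp: G_def)
  have pair_corr: "pair_corr \<eta> lam t = (\<lambda>z. \<integral>a. G a z \<partial>labelM \<eta>)"
    by (simp add: fun_eq_iff pair_corr_def G_def)
  show "integrable (wordM l \<Otimes>\<^sub>M wordM l) (pair_corr \<eta> lam t)"
    unfolding pair_corr by (rule integrable_snd[OF integrable])
  have "(\<integral>a. (cmod (char (rmu l lam a) t))\<^sup>2 \<partial>labelM \<eta>) = (\<integral>a. (\<integral>z. G a z \<partial>(wordM l \<Otimes>\<^sub>M wordM l)) \<partial>labelM \<eta>)"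
    by (simp add: rmu_def W.cmod_char_distr_sq G_def)
  also have "\<dots> = (\<integral>z. pair_corr \<eta> lam t z \<partial>(wordM l \<Otimes>\<^sub>M wordM l))"
    unfolding pair_corr by (rule Fubini_integral[OF integrable, symmetric])
  finally show "(\<integral>a. (cmod (char (rmu l lam a) t))\<^sup>2 \<partial>labelM \<eta>)
      = (\<integral>z. pair_corr \<eta> lam t z \<partial>(wordM l \<Otimes>\<^sub>M wordM l))" .
qed

lemma pair_corr_le_split_weight:
  assumes "finite (set_pmf \<eta>)" "\<bar>lam\<bar> < 1"
  shows "pair_corr \<eta> lam t z \<le> split_weight (\<lambda>k. (cmod (char (nu \<eta> lam) (t * lam ^ k)))\<^sup>2) s z"
proof (cases "z \<in> agree_upto s")
  case True
  interpret prob_space "labelM \<eta>" by (rule prob_space_labelM)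
  have "pair_corr \<eta> lam t z \<le> 1"
    unfolding pair_corr_def by (intro integral_le_const integrable_const_bound[where B=1]) auto
  then show ?thesis
    using True by (simp add: split_weight_agree_upto)
next
  case False
  then have "\<exists>k. k < s \<and> fst z k \<noteq> snd z k"
    by (cases z) (auto simp: agree_upto_def)
  then obtain k where "k < s" "fst z k \<noteq> snd z k" and "\<forall>i<k. fst z i = snd z i"
    by (subst (asm) exists_least_iff) (auto dest: order.strict_trans)
  then show ?thesis
    using integral_cos_fval_diff_first_difference[OF assms]
    by (simp add: pair_corr_def split_weight_first_difference)
qed

theorem mainTheorem3:
  fixes l :: nat and \<eta> :: "real pmf" and lam t :: real and s :: nat
  assumes "l \<ge> 2"
    and "finite (set_pmf \<eta>)"
    and "0 < lam" and "lam < 1"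
    and "s \<ge> 1"
    and "(1 / lam) ^ (s - 1) \<le> t" and "t \<le> (1 / lam) ^ s"
  shows "(\<integral>a. (cmod (char (rmu l lam a) t))\<^sup>2 \<partial>labelM \<eta>)
     \<le> 1 / real l ^ s
        + (real l - 1) * (\<Sum>k<s. (1 / real l ^ (k + 1)) * (cmod (char (nu \<eta> lam) (t * lam ^ k)))\<^sup>2)"
proof -
  define c where "c k = (cmod (char (nu \<eta> lam) (t * lam ^ k)))\<^sup>2" for k
  have "l \<ge> 1" "\<bar>lam\<bar> < 1"
    using assms by auto
  have corr_le: "pair_corr \<eta> lam t z \<le> split_weight c s z" for z
    unfolding c_def by (rule pair_corr_le_split_weight[OF assms(2) \<open>\<bar>lam\<bar> < 1\<close>])
  have "(\<integral>a. (cmod (char (rmu l lam a) t))\<^sup>2 \<partial>labelM \<eta>)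
      = (\<integral>z. pair_corr \<eta> lam t z \<partial>(wordM l \<Otimes>\<^sub>M wordM l))"
    by (rule integral_cmod_char_rmu_sq)
  also have "\<dots> \<le> (\<integral>z. split_weight c s z \<partial>(wordM l \<Otimes>\<^sub>M wordM l))"
    by (intro integral_mono integrable_pair_corr integrable_split_weight \<open>l \<ge> 1\<close> corr_le)
  also have "\<dots> = (1 / real l) ^ s + (\<Sum>k<s. c k * ((1 / real l) ^ k - (1 / real l) ^ Suc k))"
    by (rule integral_split_weight[OF \<open>l \<ge> 1\<close>])
  also have "\<dots> = 1 / real l ^ s + (real l - 1) * (\<Sum>k<s. (1 / real l ^ (k + 1)) * c k)"
    using \<open>l \<ge> 1\<close> by (simp add: sum_distrib_left field_simps power_one_over)
  finally show ?thesis
    by (simp only: c_def)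
qed

end
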